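(* With the notation of the context, let $\bm c$ be an integer vector and $\bm p\in\mathbb{Z}_\omega^{2n}$ a profile. There exists a sequence compatible with $\bm p$ for $\bm c$ if and only if there are integer vectors $\bm a_0,\bm a$ with $\bm a\neq\bm 0$ such that: (1) for every $i$ with $p_{2i-1}\in\mathbb{Z}$: $\bm r_i^\top\bm a_0\le p_{2i-1}$ and $\bm r_i^\top\bm a\le 0$; (2) for every $i$ with $p_{2i}\in\mathbb{Z}$: $p_{2i}\le\bm s_i^\top\bm a_0+\bm t_i^\top\bm c+h_i$ and $\bm s_i^\top\bm a\ge0$; (3) for every $i$ with $p_{2i}=\omega$: $\bm s_i^\top\bm a>0$; (4) for every $j\in[1,m]$: $\bm u_j^\top\bm a_0\approx^j_{e_j}\bm v_j^\top(\bm a_0+\bm a)+\bm w_j^\top\bm c+d_j$, $\bm u_j^\top\bm a\equiv_{e_j}0$ and $\bm v_j^\top\bm a\equiv_{e_j}0$.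
   Context: Fixed data: integer vectors $\bm r_i,\bm s_i,\bm t_i$ and $h_i\in\mathbb{Z}$ for $i\in[1,n]$; integer vectors $\bm u_j,\bm v_j,\bm w_j$, $d_j\in\mathbb{Z}$, $e_j>0$ and relations $\approx^j_{e_j}\in\{\equiv_{e_j},\not\equiv_{e_j}\}$ for $j\in[1,m]$ ($s\equiv_e t$ means $e\mid s-t$). $\mathbb{Z}_\omega=\mathbb{Z}\cup\{\omega\}$, $\omega$ above all integers. A profile is $\bm p=(p_1,\dots,p_{2n})\in\mathbb{Z}_\omega^{2n}$. A sequence of pairwise distinct integer vectors $\bm a_1,\bm a_2,\dots$ is compatible with $\bm p$ for $\bm c$ if for all $k<\ell$ and $j$, $\bm u_j^\top\bm a_k\approx^j_{e_j}\bm v_j^\top\bm a_\ell+\bm w_j^\top\bm c+d_j$, and for all $i$, $\sup_k\bm r_i^\top\bm a_k\le p_{2i-1}$ and $p_{2i}\le\liminf_k(\bm s_i^\top\bm a_k+\bm t_i^\top\bm c+h_i)$ (value $+\infty$ identified with $\omega$). *)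

theory Defs
  imports Main "HOL-Library.Extended_Real" "HOL-Library.Liminf_Limsup"
begin

definition dotp :: "('d::finite \<Rightarrow> int) \<Rightarrow> ('d \<Rightarrow> int) \<Rightarrow> int" where
  "dotp x y = (\<Sum>k\<in>UNIV. x k * y k)"

text \<open>Z_omega = Z with a top element omega.\<close>
datatype zomega = Fin int | Omega

fun zo_ereal :: "zomega \<Rightarrow> ereal" where
  "zo_ereal (Fin z) = ereal (real_of_int z)"
| "zo_ereal Omega = \<infinity>"

definition rel_mod :: "bool \<Rightarrow> int \<Rightarrow> int \<Rightarrow> int \<Rightarrow> bool" where
  "rel_mod eq e x y = (if eq then e dvd (x - y) else \<not> e dvd (x - y))"

definition compatible ::
  "nat \<Rightarrow> nat \<Rightarrow> (nat \<Rightarrow> 'd::finite \<Rightarrow> int) \<Rightarrow> (nat \<Rightarrow> 'd \<Rightarrow> int) \<Rightarrow> (nat \<Rightarrow> 'c::finite \<Rightarrow> int)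
   \<Rightarrow> (nat \<Rightarrow> int) \<Rightarrow> (nat \<Rightarrow> 'd \<Rightarrow> int) \<Rightarrow> (nat \<Rightarrow> 'd \<Rightarrow> int) \<Rightarrow> (nat \<Rightarrow> 'c \<Rightarrow> int)
   \<Rightarrow> (nat \<Rightarrow> int) \<Rightarrow> (nat \<Rightarrow> int) \<Rightarrow> (nat \<Rightarrow> bool)
   \<Rightarrow> (nat \<Rightarrow> zomega) \<Rightarrow> ('c \<Rightarrow> int) \<Rightarrow> (nat \<Rightarrow> 'd \<Rightarrow> int) \<Rightarrow> bool" where
  "compatible n m r s t h u v w d e eq p c a \<longleftrightarrow>
     inj a \<and>
     (\<forall>k l j. k < l \<and> j \<in> {1..m} \<longrightarrow>
        rel_mod (eq j) (e j) (dotp (u j) (a k)) (dotp (v j) (a l) + dotp (w j) c + d j)) \<and>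
     (\<forall>i\<in>{1..n}.
        (SUP k. ereal (real_of_int (dotp (r i) (a k)))) \<le> zo_ereal (p (2*i - 1)) \<and>
        zo_ereal (p (2*i)) \<le> liminf (\<lambda>k. ereal (real_of_int (dotp (s i) (a k) + dotp (t i) c + h i))))"

end

theory Submission
  imports Defs
begin

text \<open>
  If \<open>(a\<^sub>0, a)\<close> is as described, the progression \<open>k \<mapsto> a\<^sub>0 + k a\<close> is compatible: the upper
  bounds hold uniformly, the lower bounds hold from the start and diverge where \<open>p\<^sub>2\<^sub>i = \<omega>\<close>,
  and the congruences carry over from the index pair \<open>(0, 1)\<close> to any \<open>(k, l)\<close> because
  \<open>u\<^sub>j\<^sup>T a\<close> and \<open>v\<^sub>j\<^sup>T a\<close> vanish modulo \<open>e\<^sub>j\<close>.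

  Conversely, along a compatible sequence the finitely many integer sequences \<open>-r\<^sub>i\<^sup>T a\<^sub>k\<close>,
  \<open>s\<^sub>i\<^sup>T a\<^sub>k + t\<^sub>i\<^sup>T c + h\<^sub>i\<close> and the residues of \<open>u\<^sub>j\<^sup>T a\<^sub>k\<close> and \<open>v\<^sub>j\<^sup>T a\<^sub>k\<close> modulo \<open>e\<^sub>j\<close> are eventually
  bounded below, so all of them are nondecreasing along an infinite set of indices, the residues
  even constant. Two late indices \<open>k < l\<close> of that set give \<open>a\<^sub>0 = a\<^sub>k\<close> and \<open>a = a\<^sub>l - a\<^sub>k\<close>.
\<close>

lemma infinite_subset_nondecreasing:
  fixes f :: "nat \<Rightarrow> int"
  assumes S: "infinite S" and bounded: "eventually (\<lambda>k. B \<le> f k) sequentially"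
  shows "\<exists>S'\<subseteq>S. infinite S' \<and> (\<forall>k\<in>S'. \<forall>l\<in>S'. k < l \<longrightarrow> f k \<le> f l)"
proof -
  obtain N0 where N0: "\<And>k. N0 \<le> k \<Longrightarrow> B \<le> f k"
    using bounded unfolding eventually_sequentially by blast
  define S' where "S' = {k\<in>S. \<forall>l\<in>S. k < l \<longrightarrow> f k \<le> f l}"
  \<comment> \<open>an index where \<open>f\<close> attains its minimum over a tail of \<open>S\<close> lies in \<open>S'\<close>\<close>
  have "\<exists>k\<in>S'. N \<le> k" for N
  proof -
    obtain k0 where "k0 \<in> S" "max N N0 \<le> k0"
      using S unfolding infinite_nat_iff_unbounded_le by blast
    then obtain k where k: "k \<in> S" "max N N0 \<le> k"
      and least: "\<And>l. l \<in> S \<Longrightarrow> max N N0 \<le> l \<Longrightarrow> nat (f k - B) \<le> nat (f l - B)"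
      using ex_has_least_nat[of "\<lambda>k. k \<in> S \<and> max N N0 \<le> k" k0 "\<lambda>k. nat (f k - B)"] by blast
    have "f k \<le> f l" if "l \<in> S" "k < l" for l
      using least[of l] N0[of k] N0[of l] that k by simp
    with k show ?thesis unfolding S'_def by auto
  qed
  then have "infinite S'"
    unfolding infinite_nat_iff_unbounded_le by blast
  moreover have "S' \<subseteq> S" and "\<forall>k\<in>S'. \<forall>l\<in>S'. k < l \<longrightarrow> f k \<le> f l"
    unfolding S'_def by auto
  ultimately show ?thesis by blast
qed

lemma infinite_subset_nondecreasing_family:
  fixes F :: "(nat \<Rightarrow> int) set"
  assumes "finite F" and "infinite S"
    and "\<forall>f\<in>F. \<exists>B. eventually (\<lambda>k. B \<le> f k) sequentially"
  shows "\<exists>S'\<subseteq>S. infinite S' \<and> (\<forall>f\<in>F. \<forall>k\<in>S'. \<forall>l\<in>S'. k < l \<longrightarrow> f k \<le> f l)"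
  using assms
proof (induction F rule: finite_induct)
  case empty
  then show ?case by blast
next
  case (insert f F)
  from insert.IH insert.prems obtain S1 where S1: "S1 \<subseteq> S" "infinite S1"
    and mono_F: "\<forall>g\<in>F. \<forall>k\<in>S1. \<forall>l\<in>S1. k < l \<longrightarrow> g k \<le> g l"
    by auto
  from insert.prems obtain B where "eventually (\<lambda>k. B \<le> f k) sequentially"
    by auto
  from infinite_subset_nondecreasing[OF S1(2) this] obtain S2 where S2: "S2 \<subseteq> S1" "infinite S2"
    and mono_f: "\<forall>k\<in>S2. \<forall>l\<in>S2. k < l \<longrightarrow> f k \<le> f l"
    by blast
  have "\<forall>g\<in>insert f F. \<forall>k\<in>S2. \<forall>l\<in>S2. k < l \<longrightarrow> g k \<le> g l"
    using mono_F mono_f S2(1) by blast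
  with S1(1) S2 show ?case
    by (meson order_trans)
qed

lemma eventually_nondecreasing_pair:
  fixes F :: "(nat \<Rightarrow> int) set"
  assumes "finite F" and "\<forall>f\<in>F. \<exists>B. eventually (\<lambda>k. B \<le> f k) sequentially"
    and P: "eventually P sequentially" and Q: "\<And>k. eventually (Q k) sequentially"
  shows "\<exists>k l. k < l \<and> P k \<and> Q k l \<and> (\<forall>f\<in>F. f k \<le> f l)"
proof -
  obtain S where S: "infinite S" and mono: "\<forall>f\<in>F. \<forall>k\<in>S. \<forall>l\<in>S. k < l \<longrightarrow> f k \<le> f l"
    using infinite_subset_nondecreasing_family[OF assms(1) infinite_UNIV_nat assms(2)] by blast
  have frequently: "\<exists>k\<in>S. R k" if R: "eventually R sequentially" for R
  proof -
    obtain N where "\<And>k. N \<le> k \<Longrightarrow> R k"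
      using R unfolding eventually_sequentially by blast
    moreover obtain k where "k \<in> S" "N \<le> k"
      using S unfolding infinite_nat_iff_unbounded_le by blast
    ultimately show ?thesis by blast
  qed
  obtain k where k: "k \<in> S" "P k"
    using frequently[OF P] by blast
  obtain l where l: "l \<in> S" "k < l" "Q k l"
    using frequently[OF eventually_conj[OF eventually_gt_at_top[of k] Q[of k]]] by blast
  show ?thesis
    using k l mono by blast
qed

lemma eventually_nondecreasing_congruent_pair:
  fixes F :: "(nat \<Rightarrow> int) set" and G :: "((nat \<Rightarrow> int) \<times> int) set"
  assumes "finite F" and bounded: "\<forall>f\<in>F. \<exists>B. eventually (\<lambda>k. B \<le> f k) sequentially"
    and "finite G" and moduli: "\<forall>(g, q)\<in>G. 0 < q"
    and P: "eventually P sequentially" and Q: "\<And>k. eventually (Q k) sequentially"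
  shows "\<exists>k l. k < l \<and> P k \<and> Q k l \<and> (\<forall>f\<in>F. f k \<le> f l) \<and> (\<forall>(g, q)\<in>G. q dvd g l - g k)"
proof -
  \<comment> \<open>a residue sequence that is nondecreasing together with its negation is constant\<close>
  define residues where
    "residues = (\<lambda>(g, q) k. g k mod q) ` G \<union> (\<lambda>(g, q) k. - (g k mod q)) ` G"
  have "finite (F \<union> residues)"
    using \<open>finite F\<close> \<open>finite G\<close> unfolding residues_def by blast
  moreover have "\<forall>f\<in>F \<union> residues. \<exists>B. eventually (\<lambda>k. B \<le> f k) sequentially"
  proof -
    have "0 \<le> g k mod q" "- q \<le> - (g k mod q)" if "(g, q) \<in> G" for g q k
      using moduli that by (auto simp: less_imp_le)
    then have "\<forall>f\<in>residues. \<exists>B. \<forall>k. B \<le> f k"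
      unfolding residues_def by fast
    with bounded show ?thesis
      by (blast intro: always_eventually)
  qed
  ultimately obtain k l where "k < l" "P k" "Q k l" and mono: "\<forall>f\<in>F \<union> residues. f k \<le> f l"
    using eventually_nondecreasing_pair[where Q = Q, OF _ _ P Q] by blast
  have "q dvd g l - g k" if "(g, q) \<in> G" for g q
  proof -
    have "(\<lambda>k. g k mod q) \<in> residues" "(\<lambda>k. - (g k mod q)) \<in> residues"
      using that unfolding residues_def by force+
    from bspec[OF mono, OF UnI2, OF this(1)] bspec[OF mono, OF UnI2, OF this(2)]
    have "g l mod q = g k mod q"
      by simp
    then show ?thesis
      by (simp add: mod_eq_dvd_iff)
  qed
  with \<open>k < l\<close> \<open>P k\<close> \<open>Q k l\<close> mono show ?thesis
    by blast
qed

lemma le_liminf_of_int_iff: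
  fixes x :: "nat \<Rightarrow> int"
  shows "ereal (of_int z) \<le> liminf (\<lambda>k. ereal (of_int (x k)))
    \<longleftrightarrow> eventually (\<lambda>k. z \<le> x k) sequentially"
proof
  assume "ereal (of_int z) \<le> liminf (\<lambda>k. ereal (of_int (x k)))"
  then have "\<forall>y < ereal (of_int z). eventually (\<lambda>k. y < ereal (of_int (x k))) sequentially"
    by (simp only: le_Liminf_iff)
  from this[rule_format, of "ereal (of_int z - 1/2)"]
  have "eventually (\<lambda>k. ereal (of_int z - 1/2) < ereal (of_int (x k))) sequentially"
    by simp
  then show "eventually (\<lambda>k. z \<le> x k) sequentially"
    by (rule eventually_mono) simp
next
  assume "eventually (\<lambda>k. z \<le> x k) sequentially"
  then show "ereal (of_int z) \<le> liminf (\<lambda>k. ereal (of_int (x k)))"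
    by (intro Liminf_bounded) (simp add: eventually_mono)
qed

lemma liminf_of_int_eq_infinity_iff:
  fixes x :: "nat \<Rightarrow> int"
  shows "liminf (\<lambda>k. ereal (of_int (x k))) = \<infinity> \<longleftrightarrow> filterlim x at_top sequentially"
proof -
  have "liminf (\<lambda>k. ereal (of_int (x k))) = \<infinity>
      \<longleftrightarrow> (\<forall>z. ereal (of_int z) \<le> liminf (\<lambda>k. ereal (of_int (x k))))"
  proof
    assume "\<forall>z. ereal (of_int z) \<le> liminf (\<lambda>k. ereal (of_int (x k)))"
    then have "ereal y \<le> liminf (\<lambda>k. ereal (of_int (x k)))" for y
      by (meson ereal_less_eq(3) le_of_int_ceiling order_trans)
    then show "liminf (\<lambda>k. ereal (of_int (x k))) = \<infinity>"
      by (rule ereal_top)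
  qed simp
  then show ?thesis
    unfolding filterlim_at_top le_liminf_of_int_iff .
qed

lemma SUP_of_int_le_zo_ereal_iff:
  fixes x :: "nat \<Rightarrow> int"
  shows "(SUP k. ereal (of_int (x k))) \<le> zo_ereal q \<longleftrightarrow> (\<forall>z. q = Fin z \<longrightarrow> (\<forall>k. x k \<le> z))"
  by (cases q) (simp_all add: SUP_le_iff)

lemma zo_ereal_le_liminf_of_int_iff:
  fixes x :: "nat \<Rightarrow> int"
  shows "zo_ereal q \<le> liminf (\<lambda>k. ereal (of_int (x k))) \<longleftrightarrow>
    (\<forall>z. q = Fin z \<longrightarrow> eventually (\<lambda>k. z \<le> x k) sequentially) \<and>
    (q = Omega \<longrightarrow> filterlim x at_top sequentially)"
  by (cases q) (simp_all add: le_liminf_of_int_iff liminf_of_int_eq_infinity_iff)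

lemma zo_ereal_le_liminf_of_int_eventually:
  fixes x :: "nat \<Rightarrow> int"
  assumes "zo_ereal q \<le> liminf (\<lambda>k. ereal (of_int (x k)))"
  shows "\<exists>B. eventually (\<lambda>k. B \<le> x k) sequentially"
    and "eventually (\<lambda>k. \<forall>z. q = Fin z \<longrightarrow> z \<le> x k) sequentially"
    and "eventually (\<lambda>l. q = Omega \<longrightarrow> x k < x l) sequentially"
proof -
  have bounds: "\<forall>z. q = Fin z \<longrightarrow> eventually (\<lambda>k. z \<le> x k) sequentially"
    "q = Omega \<longrightarrow> (\<forall>z. eventually (\<lambda>k. z \<le> x k) sequentially)"
    using assms unfolding zo_ereal_le_liminf_of_int_iff filterlim_at_top by blast+
  show "\<exists>B. eventually (\<lambda>k. B \<le> x k) sequentially"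
    using bounds by (cases q) blast+
  show "eventually (\<lambda>k. \<forall>z. q = Fin z \<longrightarrow> z \<le> x k) sequentially"
    using bounds by (cases q) auto
  show "eventually (\<lambda>l. q = Omega \<longrightarrow> x k < x l) sequentially"
    using bounds(2)[rule_format, of "x k + 1"] by (cases q) (auto elim: eventually_mono)
qed

lemma compatible_iff:
  "compatible n m r s t h u v w d e eq p c a \<longleftrightarrow> inj a \<and>
     (\<forall>k l j. k < l \<and> j \<in> {1..m} \<longrightarrow>
        rel_mod (eq j) (e j) (dotp (u j) (a k)) (dotp (v j) (a l) + dotp (w j) c + d j)) \<and>
     (\<forall>i\<in>{1..n}.
        (\<forall>z. p (2*i - 1) = Fin z \<longrightarrow> (\<forall>k. dotp (r i) (a k) \<le> z)) \<and>
        (\<forall>z. p (2*i) = Fin z \<longrightarrow>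
           eventually (\<lambda>k. z \<le> dotp (s i) (a k) + dotp (t i) c + h i) sequentially) \<and>
        (p (2*i) = Omega \<longrightarrow>
           filterlim (\<lambda>k. dotp (s i) (a k) + dotp (t i) c + h i) at_top sequentially))"
  unfolding compatible_def SUP_of_int_le_zo_ereal_iff zo_ereal_le_liminf_of_int_iff ..

lemma dotp_add: "dotp x (\<lambda>k. f k + g k) = dotp x f + dotp x g"
  unfolding dotp_def by (simp add: distrib_left sum.distrib)

lemma dotp_diff: "dotp x (\<lambda>k. f k - g k) = dotp x f - dotp x g"
  unfolding dotp_def by (simp add: right_diff_distrib sum_subtractf)

lemma dotp_scale: "dotp x (\<lambda>k. c * f k) = c * dotp x f"
  unfolding dotp_def by (simp add: sum_distrib_left ac_simps)

lemma rel_mod_cong: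
  assumes "e dvd (x' - y') - (x - y)"
  shows "rel_mod b e x' y' \<longleftrightarrow> rel_mod b e x y"
proof -
  have "x' - y' = (x - y) + ((x' - y') - (x - y))" by simp
  then show ?thesis
    unfolding rel_mod_def using assms by (metis dvd_add_left_iff)
qed

lemma inj_arith_progression:
  fixes a0 a :: "'d \<Rightarrow> int"
  assumes "a \<noteq> (\<lambda>_. 0)"
  shows "inj (\<lambda>k x. a0 x + int k * a x)"
proof (rule injI)
  fix k l assume "(\<lambda>x. a0 x + int k * a x) = (\<lambda>x. a0 x + int l * a x)"
  moreover obtain x where "a x \<noteq> 0" using assms by auto
  ultimately show "k = l" by (metis add_left_cancel mult_right_cancel of_nat_eq_iff)
qed

lemma filterlim_arith_progression_at_top:
  fixes b q :: int
  assumes "0 < q"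
  shows "filterlim (\<lambda>k. b + int k * q) at_top sequentially"
  unfolding filterlim_at_top
proof
  fix z
  have "z \<le> b + int k * q" if "nat (z - b) \<le> k" for k
  proof -
    have "z - b \<le> int k" using that by linarith
    also have "\<dots> \<le> int k * q" using assms by (simp add: mult_le_cancel_left1)
    finally show ?thesis by simp
  qed
  then show "eventually (\<lambda>k. z \<le> b + int k * q) sequentially"
    unfolding eventually_sequentially by blast
qed

definition progression_certificate ::
  "nat \<Rightarrow> nat \<Rightarrow> (nat \<Rightarrow> 'd::finite \<Rightarrow> int) \<Rightarrow> (nat \<Rightarrow> 'd \<Rightarrow> int) \<Rightarrow> (nat \<Rightarrow> 'c::finite \<Rightarrow> int)
   \<Rightarrow> (nat \<Rightarrow> int) \<Rightarrow> (nat \<Rightarrow> 'd \<Rightarrow> int) \<Rightarrow> (nat \<Rightarrow> 'd \<Rightarrow> int) \<Rightarrow> (nat \<Rightarrow> 'c \<Rightarrow> int)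
   \<Rightarrow> (nat \<Rightarrow> int) \<Rightarrow> (nat \<Rightarrow> int) \<Rightarrow> (nat \<Rightarrow> bool)
   \<Rightarrow> (nat \<Rightarrow> zomega) \<Rightarrow> ('c \<Rightarrow> int) \<Rightarrow> ('d \<Rightarrow> int) \<Rightarrow> ('d \<Rightarrow> int) \<Rightarrow> bool" where
  "progression_certificate n m r s t h u v w d e eq p c a0 a \<longleftrightarrow> a \<noteq> (\<lambda>_. 0) \<and>
     (\<forall>i\<in>{1..n}. \<forall>z. p (2*i - 1) = Fin z \<longrightarrow> dotp (r i) a0 \<le> z \<and> dotp (r i) a \<le> 0) \<and>
     (\<forall>i\<in>{1..n}. \<forall>z. p (2*i) = Fin z \<longrightarrow>
        z \<le> dotp (s i) a0 + dotp (t i) c + h i \<and> dotp (s i) a \<ge> 0) \<and>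
     (\<forall>i\<in>{1..n}. p (2*i) = Omega \<longrightarrow> dotp (s i) a > 0) \<and>
     (\<forall>j\<in>{1..m}.
        rel_mod (eq j) (e j) (dotp (u j) a0) (dotp (v j) (\<lambda>k. a0 k + a k) + dotp (w j) c + d j) \<and>
        e j dvd dotp (u j) a \<and> e j dvd dotp (v j) a)"

lemma compatible_arith_progression:
  assumes "progression_certificate n m r s t h u v w d e eq p c a0 a"
  shows "compatible n m r s t h u v w d e eq p c (\<lambda>k x. a0 x + int k * a x)"
proof -
  from assms obtain nonzero: "a \<noteq> (\<lambda>_. 0)"
    and upper: "\<forall>i\<in>{1..n}. \<forall>z. p (2*i - 1) = Fin z \<longrightarrow> dotp (r i) a0 \<le> z \<and> dotp (r i) a \<le> 0"
    and lower: "\<forall>i\<in>{1..n}. \<forall>z. p (2*i) = Fin z \<longrightarrow>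
          z \<le> dotp (s i) a0 + dotp (t i) c + h i \<and> dotp (s i) a \<ge> 0"
    and unbounded: "\<forall>i\<in>{1..n}. p (2*i) = Omega \<longrightarrow> dotp (s i) a > 0"
    and congruence: "\<forall>j\<in>{1..m}.
          rel_mod (eq j) (e j) (dotp (u j) a0) (dotp (v j) (\<lambda>k. a0 k + a k) + dotp (w j) c + d j) \<and>
          e j dvd dotp (u j) a \<and> e j dvd dotp (v j) a"
    unfolding progression_certificate_def by blast
  have prog: "dotp y (\<lambda>x. a0 x + int k * a x) = dotp y a0 + int k * dotp y a" for y k
    by (simp add: dotp_add dotp_scale)
  show ?thesis
    unfolding compatible_iff prog
  proof (intro conjI allI impI ballI)
    show "inj (\<lambda>k x. a0 x + int k * a x)"
      using nonzero by (rule inj_arith_progression)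
  next
    fix k l j :: nat assume "k < l \<and> j \<in> {1..m}"
    then have j: "j \<in> {1..m}" by simp
    \<comment> \<open>passing from indices \<open>(0, 1)\<close> to \<open>(k, l)\<close> changes the difference by a multiple of \<open>e j\<close>\<close>
    have "e j dvd int k * dotp (u j) a - (int l - 1) * dotp (v j) a"
      using congruence j by simp
    then show "rel_mod (eq j) (e j) (dotp (u j) a0 + int k * dotp (u j) a)
        (dotp (v j) a0 + int l * dotp (v j) a + dotp (w j) c + d j)"
      using congruence j
      by (subst rel_mod_cong[where x = "dotp (u j) a0"]) (auto simp: dotp_add algebra_simps)
  next
    fix i k :: nat and z assume "i \<in> {1..n}" "p (2*i - 1) = Fin z"
    with upper have "dotp (r i) a0 \<le> z" "dotp (r i) a \<le> 0"
      by auto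
    then show "dotp (r i) a0 + int k * dotp (r i) a \<le> z"
      using mult_nonneg_nonpos[of "int k" "dotp (r i) a"] by linarith
  next
    fix i z assume "i \<in> {1..n}" "p (2*i) = Fin z"
    with lower have "z \<le> dotp (s i) a0 + dotp (t i) c + h i" "0 \<le> dotp (s i) a"
      by auto
    then have "z \<le> dotp (s i) a0 + int k * dotp (s i) a + dotp (t i) c + h i" for k
      using mult_nonneg_nonneg[of "int k" "dotp (s i) a"] by linarith
    then show "eventually (\<lambda>k. z \<le> dotp (s i) a0 + int k * dotp (s i) a + dotp (t i) c + h i)
        sequentially"
      by (intro always_eventually allI)
  next
    fix i assume "i \<in> {1..n}" "p (2*i) = Omega"
    with unbounded show "filterlim (\<lambda>k. dotp (s i) a0 + int k * dotp (s i) a + dotp (t i) c + h i)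
        at_top sequentially"
      using filterlim_arith_progression_at_top[of "dotp (s i) a" "dotp (s i) a0 + dotp (t i) c + h i"]
      by (simp add: ac_simps)
  qed
qed

lemma compatible_nondecreasing_pair:
  assumes e_pos: "\<forall>j\<in>{1..m}. e j > 0"
    and "compatible n m r s t h u v w d e eq p c a"
  defines "X i k \<equiv> dotp (s i) (a k) + dotp (t i) c + h i"
  shows "\<exists>k l. k < l \<and>
    (\<forall>i\<in>{1..n}. \<forall>z. p (2*i - 1) = Fin z \<longrightarrow> dotp (r i) (a l) \<le> dotp (r i) (a k)) \<and>
    (\<forall>i\<in>{1..n}. (\<forall>z. p (2*i) = Fin z \<longrightarrow> z \<le> X i k) \<and> X i k \<le> X i l \<and>
       (p (2*i) = Omega \<longrightarrow> X i k < X i l)) \<and>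
    (\<forall>j\<in>{1..m}. e j dvd dotp (u j) (a l) - dotp (u j) (a k) \<and>
       e j dvd dotp (v j) (a l) - dotp (v j) (a k))"
proof -
  from assms(2) have upper: "\<forall>i\<in>{1..n}. \<forall>z. p (2*i - 1) = Fin z \<longrightarrow> (\<forall>k. dotp (r i) (a k) \<le> z)"
    unfolding compatible_iff by blast
  from assms(2) have "\<forall>i\<in>{1..n}. zo_ereal (p (2*i)) \<le> liminf (\<lambda>k. ereal (of_int (X i k)))"
    unfolding compatible_def X_def by blast
  note lower = zo_ereal_le_liminf_of_int_eventually[OF this[rule_format]]
  define F where "F = (\<lambda>i k. - dotp (r i) (a k)) ` {i\<in>{1..n}. \<exists>z. p (2*i - 1) = Fin z} \<union> X ` {1..n}"
  define G where "G = (\<Union>j\<in>{1..m}. {(\<lambda>k. dotp (u j) (a k), e j), (\<lambda>k. dotp (v j) (a k), e j)})"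
  have "\<exists>B. eventually (\<lambda>k. B \<le> - dotp (r i) (a k)) sequentially"
    if "i \<in> {1..n}" "p (2*i - 1) = Fin z" for i z
    using upper that by (intro exI[of _ "- z"] always_eventually) auto
  then have bounded: "\<forall>f\<in>F. \<exists>B. eventually (\<lambda>k. B \<le> f k) sequentially"
    unfolding F_def ball_Un Ball_image_comp comp_def using lower(1) by blast
  have "finite F" "finite G" and moduli: "\<forall>(g, q)\<in>G. 0 < q"
    using e_pos unfolding F_def G_def by auto
  define P where "P k \<longleftrightarrow> (\<forall>i\<in>{1..n}. \<forall>z. p (2*i) = Fin z \<longrightarrow> z \<le> X i k)" for k
  define Q where "Q k l \<longleftrightarrow> (\<forall>i\<in>{1..n}. p (2*i) = Omega \<longrightarrow> X i k < X i l)" for k l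
  have P: "eventually P sequentially"
    unfolding P_def using lower(2) by (intro eventually_ball_finite) auto
  have Q: "eventually (Q k) sequentially" for k
    unfolding Q_def using lower(3) by (intro eventually_ball_finite) auto
  obtain k l where "k < l" "P k" "Q k l"
    and mono: "\<forall>f\<in>F. f k \<le> f l" and congruent: "\<forall>(g, q)\<in>G. q dvd g l - g k"
    using eventually_nondecreasing_congruent_pair[where Q = Q,
        OF \<open>finite F\<close> bounded \<open>finite G\<close> moduli P Q]
    by blast
  have "dotp (r i) (a l) \<le> dotp (r i) (a k)" if "i \<in> {1..n}" "p (2*i - 1) = Fin z" for i z
  proof -
    have "(\<lambda>k. - dotp (r i) (a k)) \<in> F"
      using that unfolding F_def by blast
    from bspec[OF mono this] show ?thesis by simp
  qed
  moreover have "X i k \<le> X i l" if "i \<in> {1..n}" for i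
  proof -
    have "X i \<in> F"
      using that unfolding F_def by blast
    from bspec[OF mono this] show ?thesis .
  qed
  moreover have "e j dvd dotp (u j) (a l) - dotp (u j) (a k) \<and>
      e j dvd dotp (v j) (a l) - dotp (v j) (a k)" if "j \<in> {1..m}" for j
  proof -
    have "(\<lambda>k. dotp (u j) (a k), e j) \<in> G" "(\<lambda>k. dotp (v j) (a k), e j) \<in> G"
      using that unfolding G_def by blast+
    from bspec[OF congruent this(1)] bspec[OF congruent this(2)] show ?thesis by simp
  qed
  ultimately show ?thesis
    using \<open>k < l\<close> \<open>P k\<close> \<open>Q k l\<close> unfolding P_def Q_def by blast
qed

lemma progression_certificate_of_compatible:
  assumes e_pos: "\<forall>j\<in>{1..m}. e j > 0"
    and compatible: "compatible n m r s t h u v w d e eq p c a"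
  shows "\<exists>a0 a'. progression_certificate n m r s t h u v w d e eq p c a0 a'"
proof -
  obtain k l where "k < l"
    and r_mono: "\<forall>i\<in>{1..n}. \<forall>z. p (2*i - 1) = Fin z \<longrightarrow> dotp (r i) (a l) \<le> dotp (r i) (a k)"
    and s_mono: "\<forall>i\<in>{1..n}. (\<forall>z. p (2*i) = Fin z \<longrightarrow> z \<le> dotp (s i) (a k) + dotp (t i) c + h i) \<and>
      dotp (s i) (a k) + dotp (t i) c + h i \<le> dotp (s i) (a l) + dotp (t i) c + h i \<and>
      (p (2*i) = Omega \<longrightarrow>
        dotp (s i) (a k) + dotp (t i) c + h i < dotp (s i) (a l) + dotp (t i) c + h i)"
    and residues: "\<forall>j\<in>{1..m}. e j dvd dotp (u j) (a l) - dotp (u j) (a k) \<and>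
       e j dvd dotp (v j) (a l) - dotp (v j) (a k)"
    using compatible_nondecreasing_pair[OF e_pos compatible] by blast
  from compatible obtain "inj a"
    and congruence: "\<forall>k l j. k < l \<and> j \<in> {1..m} \<longrightarrow>
        rel_mod (eq j) (e j) (dotp (u j) (a k)) (dotp (v j) (a l) + dotp (w j) c + d j)"
    and upper: "\<forall>i\<in>{1..n}. \<forall>z. p (2*i - 1) = Fin z \<longrightarrow> (\<forall>k. dotp (r i) (a k) \<le> z)"
    unfolding compatible_iff by blast
  have "a l \<noteq> a k"
    using \<open>k < l\<close> by (simp add: inj_eq[OF \<open>inj a\<close>])
  then have nonzero: "(\<lambda>x. a l x - a k x) \<noteq> (\<lambda>_. 0)"
    by (auto simp: fun_eq_iff)
  show ?thesis
    unfolding progression_certificate_def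
  proof (rule exI[of _ "a k"], rule exI[of _ "\<lambda>x. a l x - a k x"], intro conjI ballI allI impI)
    fix i z assume "i \<in> {1..n}" "p (2*i - 1) = Fin z"
    with upper r_mono show "dotp (r i) (a k) \<le> z" "dotp (r i) (\<lambda>x. a l x - a k x) \<le> 0"
      by (auto simp: dotp_diff)
  next
    fix i z assume "i \<in> {1..n}" "p (2*i) = Fin z"
    with s_mono show "z \<le> dotp (s i) (a k) + dotp (t i) c + h i"
      "0 \<le> dotp (s i) (\<lambda>x. a l x - a k x)"
      by (auto simp: dotp_diff)
  next
    fix i assume "i \<in> {1..n}" "p (2*i) = Omega"
    with s_mono show "0 < dotp (s i) (\<lambda>x. a l x - a k x)"
      by (auto simp: dotp_diff)
  next
    fix j assume j: "j \<in> {1..m}"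
    have "(\<lambda>x. a k x + (a l x - a k x)) = a l"
      by simp
    with congruence \<open>k < l\<close> j
    show "rel_mod (eq j) (e j) (dotp (u j) (a k))
        (dotp (v j) (\<lambda>x. a k x + (a l x - a k x)) + dotp (w j) c + d j)"
      by simp
    from j residues show "e j dvd dotp (u j) (\<lambda>x. a l x - a k x)"
      "e j dvd dotp (v j) (\<lambda>x. a l x - a k x)"
      by (simp_all add: dotp_diff)
  qed (fact nonzero)
qed

theorem mainTheorem9:
  fixes n m :: nat
    and r s :: "nat \<Rightarrow> 'd::finite \<Rightarrow> int" and t :: "nat \<Rightarrow> 'c::finite \<Rightarrow> int" and h :: "nat \<Rightarrow> int"
    and u v :: "nat \<Rightarrow> 'd \<Rightarrow> int" and w :: "nat \<Rightarrow> 'c \<Rightarrow> int" and d e :: "nat \<Rightarrow> int"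
    and eq :: "nat \<Rightarrow> bool"
    and p :: "nat \<Rightarrow> zomega" and c :: "'c \<Rightarrow> int"
  assumes e_pos: "\<forall>j\<in>{1..m}. e j > 0"
  shows "(\<exists>a :: nat \<Rightarrow> 'd \<Rightarrow> int. compatible n m r s t h u v w d e eq p c a) \<longleftrightarrow>
    (\<exists>a0 a :: 'd \<Rightarrow> int. a \<noteq> (\<lambda>_. 0) \<and>
       (\<forall>i\<in>{1..n}. \<forall>z. p (2*i - 1) = Fin z \<longrightarrow> dotp (r i) a0 \<le> z \<and> dotp (r i) a \<le> 0) \<and>
       (\<forall>i\<in>{1..n}. \<forall>z. p (2*i) = Fin z \<longrightarrow>
          z \<le> dotp (s i) a0 + dotp (t i) c + h i \<and> dotp (s i) a \<ge> 0) \<and>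
       (\<forall>i\<in>{1..n}. p (2*i) = Omega \<longrightarrow> dotp (s i) a > 0) \<and>
       (\<forall>j\<in>{1..m}.
          rel_mod (eq j) (e j) (dotp (u j) a0) (dotp (v j) (\<lambda>k. a0 k + a k) + dotp (w j) c + d j) \<and>
          e j dvd dotp (u j) a \<and> e j dvd dotp (v j) a))"
proof -
  have "(\<exists>a. compatible n m r s t h u v w d e eq p c a)
      \<longleftrightarrow> (\<exists>a0 a. progression_certificate n m r s t h u v w d e eq p c a0 a)"
  proof
    assume "\<exists>a. compatible n m r s t h u v w d e eq p c a"
    then obtain a where "compatible n m r s t h u v w d e eq p c a" ..
    then show "\<exists>a0 a. progression_certificate n m r s t h u v w d e eq p c a0 a"
      by (rule progression_certificate_of_compatible[OF e_pos])
  next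
    assume "\<exists>a0 a. progression_certificate n m r s t h u v w d e eq p c a0 a"
    then obtain a0 a where "progression_certificate n m r s t h u v w d e eq p c a0 a" by blast
    then show "\<exists>a. compatible n m r s t h u v w d e eq p c a"
      by (blast intro: compatible_arith_progression)
  qed
  then show ?thesis
    unfolding progression_certificate_def .
qed

end
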